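(* Let $\alpha$ be an ordinal and let $\mathcal{X},\mathcal{Y}$ be families of metric spaces. If $F\colon\mathcal{X}\to\mathcal{Y}$ is a coarse embedding and $\mathcal{Y}\in\mathfrak{C}_\alpha$, then $\mathcal{X}\in\mathfrak{C}_\alpha$.
   Context: A family $\mathcal{U}$ of metric subspaces of a metric space $(X,d)$ is $r$-disjoint if $d(x,y)>r$ whenever $x\in U$, $y\in U'$, $U\neq U'$ in $\mathcal{U}$. For families $\mathcal{X},\mathcal{Y}$ and $R\in\mathbb{R}^{\mathbb{N}}$, $\mathcal{X}\xrightarrow{R}\mathcal{Y}$ means: there is an integer $k$ such that for each $X\in\mathcal{X}$ there are subcollections $\mathcal{U}_1,\dots,\mathcal{U}_k\subseteq\mathcal{Y}$ of subspaces of $X$, each $\mathcal{U}_i$ being $R_i$-disjoint, with $\bigcup_i\mathcal{U}_i$ covering $X$. A family is bounded if the diameters of its members are uniformly bounded. $\mathfrak{C}_0$ is the class of bounded families; for an ordinal $\alpha>0$, $\mathfrak{C}_\alpha$ is the class of families $\mathcal{X}$ such that for every $R\in\mathbb{R}^{\mathbb{N}}$ there exist $\beta<\alpha$ and $\mathcal{Y}\in\mathfrak{C}_\beta$ with $\mathcal{X}\xrightarrow{R}\mathcal{Y}$. A map $F\colon\mathcal{X}\to\mathcal{Y}$ of families is a collection of maps $f\colon X_f\to Y_f$ with $\{X_f\}_{f\in F}=\mathcal{X}$ and $Y_f\in\mathcal{Y}$. It is a coarse embedding if there are non-decreasing $\rho_1,\rho_2\colon[0,\infty)\to[0,\infty)$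 with $\rho_1$ proper such that $\rho_1(d(x,x'))\le d(f(x),f(x'))\le\rho_2(d(x,x'))$ for all $f\in F$ and $x,x'\in X_f$. *)

theory Defs
  imports "HOL-Analysis.Analysis"
begin

definition is_subspace :: "'a metric \<Rightarrow> 'a metric \<Rightarrow> bool" where
  "is_subspace U X \<longleftrightarrow> (\<exists>S. S \<subseteq> mspace X \<and> U = submetric X S)"

text \<open>A family of subspaces of X is r-disjoint (distances measured in X).\<close>
definition r_disjoint :: "'a metric \<Rightarrow> 'a metric set \<Rightarrow> real \<Rightarrow> bool" where
  "r_disjoint X \<U> r \<longleftrightarrow>
     (\<forall>U\<in>\<U>. \<forall>U'\<in>\<U>. U \<noteq> U' \<longrightarrow>
        (\<forall>x\<in>mspace U. \<forall>y\<in>mspace U'. mdist X x y > r))"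

text \<open>The relation X --R--> Y (R indexed from 1).\<close>
definition fam_arrow :: "'a metric set \<Rightarrow> (nat \<Rightarrow> real) \<Rightarrow> 'a metric set \<Rightarrow> bool" where
  "fam_arrow \<X> R \<Y> \<longleftrightarrow>
     (\<exists>k::nat. \<forall>X\<in>\<X>. \<exists>\<U> :: nat \<Rightarrow> 'a metric set.
        (\<forall>i\<in>{1..k}. \<U> i \<subseteq> \<Y> \<and> (\<forall>U\<in>\<U> i. is_subspace U X) \<and> r_disjoint X (\<U> i) (R i))
        \<and> (\<Union>i\<in>{1..k}. \<Union>U\<in>\<U> i. mspace U) = mspace X)"

definition bounded_family :: "'a metric set \<Rightarrow> bool" where
  "bounded_family \<X> \<longleftrightarrow>
     (\<exists>B::real. \<forall>X\<in>\<X>. \<forall>x\<in>mspace X. \<forall>y\<in>mspace X. mdist X x y \<le> B)"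

text \<open>The classes C_alpha, by well-founded recursion over a well-ordered type
  (an ordinal alpha is represented as an element of a well-ordered type;
  the least element plays the role of 0).\<close>
definition Cclass :: "'o::wellorder \<Rightarrow> 'a metric set set" where
  "Cclass = wfrec {(x, y). x < y}
     (\<lambda>C \<alpha>. if (\<forall>\<beta>. \<not> \<beta> < \<alpha>) then {\<X>. bounded_family \<X>}
            else {\<X>. \<forall>R::nat \<Rightarrow> real. \<exists>\<beta><\<alpha>. \<exists>\<Y>\<in>C \<beta>. fam_arrow \<X> R \<Y>})"

lemma Cclass_unfold:
  fixes \<alpha> :: "'o::wellorder"
  shows "(Cclass \<alpha> :: 'a metric set set) = (if (\<forall>\<beta>. \<not> \<beta> < \<alpha>) then {\<X>. bounded_family \<X>}
            else {\<X>. \<forall>R::nat \<Rightarrow> real. \<exists>\<beta><\<alpha>. \<exists>\<Y>\<in>Cclass \<beta>. fam_arrow \<X> R \<Y>})"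
proof -
  have c: "\<And>\<beta>. \<beta> < \<alpha> \<Longrightarrow> cut (Cclass :: 'o \<Rightarrow> 'a metric set set) {(x, y). x < y} \<alpha> \<beta> = Cclass \<beta>"
    by (simp add: cut_def)
  have e: "(Cclass \<alpha> :: 'a metric set set) = (if (\<forall>\<beta>. \<not> \<beta> < \<alpha>) then {\<X>. bounded_family \<X>}
            else {\<X>. \<forall>R::nat \<Rightarrow> real. \<exists>\<beta><\<alpha>. \<exists>\<Y>\<in>cut (Cclass :: 'o \<Rightarrow> 'a metric set set) {(x, y). x < y} \<alpha> \<beta>. fam_arrow \<X> R \<Y>})"
    unfolding Cclass_def by (subst wfrec[OF wellorder_class.wf]) simp
  have "{\<X>. \<forall>R::nat \<Rightarrow> real. \<exists>\<beta><\<alpha>. \<exists>\<Y>\<in>cut (Cclass :: 'o \<Rightarrow> 'a metric set set) {(x, y). x < y} \<alpha> \<beta>. fam_arrow \<X> R \<Y>}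
     = {\<X>. \<forall>R::nat \<Rightarrow> real. \<exists>\<beta><\<alpha>. \<exists>\<Y>\<in>Cclass \<beta>. fam_arrow \<X> R \<Y>}"
    using c by (metis (no_types, lifting))
  with e show ?thesis by simp
qed

text \<open>A map of families: a set of triples (X_f, f, Y_f).\<close>
definition family_map ::
  "('a metric \<times> ('a \<Rightarrow> 'b) \<times> 'b metric) set \<Rightarrow> 'a metric set \<Rightarrow> 'b metric set \<Rightarrow> bool" where
  "family_map F \<X> \<Y> \<longleftrightarrow>
     {X. \<exists>f Y. (X, f, Y) \<in> F} = \<X> \<and>
     (\<forall>(X, f, Y)\<in>F. Y \<in> \<Y> \<and> f ` mspace X \<subseteq> mspace Y)"

definition coarse_embedding_fam :: "('a metric \<times> ('a \<Rightarrow> 'b) \<times> 'b metric) set \<Rightarrow> bool" where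
  "coarse_embedding_fam F \<longleftrightarrow>
     (\<exists>\<rho>1 \<rho>2 :: real \<Rightarrow> real.
        mono_on {0..} \<rho>1 \<and> mono_on {0..} \<rho>2 \<and>
        (\<forall>t\<ge>0. \<rho>1 t \<ge> 0 \<and> \<rho>2 t \<ge> 0) \<and>
        (\<forall>b. bounded {t. t \<ge> 0 \<and> \<rho>1 t \<le> b}) \<and>
        (\<forall>(X, f, Y)\<in>F. \<forall>x\<in>mspace X. \<forall>x'\<in>mspace X.
           \<rho>1 (mdist X x x') \<le> mdist Y (f x) (f x') \<and>
           mdist Y (f x) (f x') \<le> \<rho>2 (mdist X x x')))"

end

theory Submission
  imports Defs
begin

text \<open>Coarse embeddings pull decompositions back: an \<open>R'\<close>-disjoint cover of \<open>Y\<^sub>f\<close> by members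
  of \<open>\<Z>\<close> pulls back along \<open>f\<close> to an \<open>R\<close>-disjoint cover of \<open>X\<^sub>f\<close>, as soon as \<open>R' i \<ge> \<rho>\<^sub>2 (R i)\<close>.
  The pulled-back pieces form a family that again embeds coarsely into \<open>\<Z>\<close> with the same
  control functions, so transfinite induction on \<open>\<alpha>\<close> applies; at the bottom, \<open>\<rho>\<^sub>1\<close> being
  proper turns a diameter bound in \<open>\<Y>\<close> into one in \<open>\<X>\<close>.\<close>

definition preimage_submetric :: "'a metric \<Rightarrow> ('a \<Rightarrow> 'b) \<Rightarrow> 'b metric \<Rightarrow> 'a metric" where
  "preimage_submetric X f U = submetric X (mspace X \<inter> f -` mspace U)"

definition pullback_family ::
  "('a metric \<times> ('a \<Rightarrow> 'b) \<times> 'b metric) set \<Rightarrow> 'b metric set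
     \<Rightarrow> ('a metric \<times> ('a \<Rightarrow> 'b) \<times> 'b metric) set" where
  "pullback_family F \<Z> =
     {(preimage_submetric X f U, f, U) | X f Y U. (X, f, Y) \<in> F \<and> U \<in> \<Z> \<and> is_subspace U Y}"

lemma family_mapE:
  assumes "family_map F \<X> \<Y>" and "X \<in> \<X>"
  obtains f Y where "(X, f, Y) \<in> F" "Y \<in> \<Y>" "f ` mspace X \<subseteq> mspace Y"
  using assms unfolding family_map_def by fastforce

lemma family_map_pullback: "family_map (pullback_family F \<Z>) (fst ` pullback_family F \<Z>) \<Z>"
  unfolding family_map_def pullback_family_def preimage_submetric_def by force

lemma coarse_embedding_fam_pullback:
  assumes "coarse_embedding_fam F"
  shows "coarse_embedding_fam (pullback_family F \<Z>)"
proof -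
  obtain \<rho>1 \<rho>2 :: "real \<Rightarrow> real" where
    control: "mono_on {0..} \<rho>1 \<and> mono_on {0..} \<rho>2 \<and> (\<forall>t\<ge>0. \<rho>1 t \<ge> 0 \<and> \<rho>2 t \<ge> 0) \<and>
        (\<forall>b. bounded {t. t \<ge> 0 \<and> \<rho>1 t \<le> b})" and
    emb: "\<forall>(X, f, Y)\<in>F. \<forall>x\<in>mspace X. \<forall>x'\<in>mspace X.
           \<rho>1 (mdist X x x') \<le> mdist Y (f x) (f x') \<and> mdist Y (f x) (f x') \<le> \<rho>2 (mdist X x x')"
    using assms unfolding coarse_embedding_fam_def by blast
  have "\<forall>(V, f, U)\<in>pullback_family F \<Z>. \<forall>x\<in>mspace V. \<forall>x'\<in>mspace V.
           \<rho>1 (mdist V x x') \<le> mdist U (f x) (f x') \<and> mdist U (f x) (f x') \<le> \<rho>2 (mdist V x x')"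
  proof (clarify)
    fix V f U x x'
    assume "(V, f, U) \<in> pullback_family F \<Z>" and x: "x \<in> mspace V" "x' \<in> mspace V"
    then obtain X Y S where XY: "(X, f, Y) \<in> F" and U: "U = submetric Y S"
      and V: "V = preimage_submetric X f U"
      unfolding pullback_family_def is_subspace_def by blast
    have "x \<in> mspace X" "x' \<in> mspace X" "mdist V x x' = mdist X x x'"
      using x unfolding V preimage_submetric_def by auto
    moreover have "mdist U (f x) (f x') = mdist Y (f x) (f x')"
      unfolding U by simp
    ultimately show "\<rho>1 (mdist V x x') \<le> mdist U (f x) (f x') \<and> mdist U (f x) (f x') \<le> \<rho>2 (mdist V x x')"
      using emb XY by fastforce
  qed
  with control show ?thesis unfolding coarse_embedding_fam_def by blast
qed

lemma is_subspace_preimage_submetric: "is_subspace (preimage_submetric X f U) X"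
  unfolding is_subspace_def preimage_submetric_def by blast

lemma r_disjoint_preimage_submetric:
  assumes mono: "mono_on {0..} \<rho>"
    and lipschitz: "\<forall>x\<in>mspace X. \<forall>y\<in>mspace X. mdist Y (f x) (f y) \<le> \<rho> (mdist X x y)"
    and disjoint: "r_disjoint Y \<U> (\<rho> (max r 0))"
  shows "r_disjoint X (preimage_submetric X f ` \<U>) r"
  unfolding r_disjoint_def
proof (intro ballI impI)
  fix V V' x y
  assume "V \<in> preimage_submetric X f ` \<U>" "V' \<in> preimage_submetric X f ` \<U>" "V \<noteq> V'"
    and x: "x \<in> mspace V" and y: "y \<in> mspace V'"
  then obtain U U' where U: "U \<in> \<U>" "U' \<in> \<U>" "U \<noteq> U'"
    and V: "V = preimage_submetric X f U" "V' = preimage_submetric X f U'" by blast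
  have "x \<in> mspace X" "f x \<in> mspace U" "y \<in> mspace X" "f y \<in> mspace U'"
    using x y V unfolding preimage_submetric_def by auto
  then have far: "\<rho> (max r 0) < mdist Y (f x) (f y)" and near: "mdist Y (f x) (f y) \<le> \<rho> (mdist X x y)"
    using disjoint U lipschitz unfolding r_disjoint_def by blast+
  show "r < mdist X x y"
  proof (rule ccontr)
    assume "\<not> r < mdist X x y"
    then have "\<rho> (mdist X x y) \<le> \<rho> (max r 0)"
      by (intro mono_onD[OF mono]) auto
    with far near show False by linarith
  qed
qed

lemma cover_preimage_submetric:
  assumes "f ` mspace X \<subseteq> (\<Union>i\<in>I. \<Union>U\<in>\<U> i. mspace U)"
  shows "(\<Union>i\<in>I. \<Union>V\<in>preimage_submetric X f ` \<U> i. mspace V) = mspace X"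
  using assms unfolding preimage_submetric_def by fastforce

lemma fam_arrow_pullback:
  assumes fm: "family_map F \<X> \<Y>" and ce: "coarse_embedding_fam F"
  shows "\<exists>R'. \<forall>\<Z>. fam_arrow \<Y> R' \<Z> \<longrightarrow> fam_arrow \<X> R (fst ` pullback_family F \<Z>)"
proof -
  obtain \<rho>2 :: "real \<Rightarrow> real" where mono: "mono_on {0..} \<rho>2" and
    upper: "\<forall>(X, f, Y)\<in>F. \<forall>x\<in>mspace X. \<forall>x'\<in>mspace X. mdist Y (f x) (f x') \<le> \<rho>2 (mdist X x x')"
    using ce unfolding coarse_embedding_fam_def by fast
  have "fam_arrow \<X> R (fst ` pullback_family F \<Z>)"
    if "fam_arrow \<Y> (\<lambda>i. \<rho>2 (max (R i) 0)) \<Z>" for \<Z>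
  proof -
    from that obtain k where k: "\<forall>Y\<in>\<Y>. \<exists>\<U>.
        (\<forall>i\<in>{1..k}. \<U> i \<subseteq> \<Z> \<and> (\<forall>U\<in>\<U> i. is_subspace U Y) \<and> r_disjoint Y (\<U> i) (\<rho>2 (max (R i) 0)))
        \<and> (\<Union>i\<in>{1..k}. \<Union>U\<in>\<U> i. mspace U) = mspace Y"
      unfolding fam_arrow_def by blast
    have "\<exists>\<V>. (\<forall>i\<in>{1..k}. \<V> i \<subseteq> fst ` pullback_family F \<Z> \<and> (\<forall>V\<in>\<V> i. is_subspace V X)
               \<and> r_disjoint X (\<V> i) (R i))
             \<and> (\<Union>i\<in>{1..k}. \<Union>V\<in>\<V> i. mspace V) = mspace X" if "X \<in> \<X>" for X
    proof -
      obtain f Y where f: "(X, f, Y) \<in> F" "Y \<in> \<Y>" "f ` mspace X \<subseteq> mspace Y"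
        using fm \<open>X \<in> \<X>\<close> by (rule family_mapE)
      obtain \<U> where \<U>: "\<forall>i\<in>{1..k}. \<U> i \<subseteq> \<Z> \<and> (\<forall>U\<in>\<U> i. is_subspace U Y)
            \<and> r_disjoint Y (\<U> i) (\<rho>2 (max (R i) 0))"
        and cover: "(\<Union>i\<in>{1..k}. \<Union>U\<in>\<U> i. mspace U) = mspace Y"
        using bspec[OF k f(2)] by blast
      have "preimage_submetric X f ` \<U> i \<subseteq> fst ` pullback_family F \<Z>" if "i \<in> {1..k}" for i
      proof
        fix V assume "V \<in> preimage_submetric X f ` \<U> i"
        then obtain U where "U \<in> \<U> i" "V = preimage_submetric X f U" by blast
        with f(1) \<U> that have "(V, f, U) \<in> pullback_family F \<Z>"
          unfolding pullback_family_def by blast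
        then show "V \<in> fst ` pullback_family F \<Z>" by force
      qed
      moreover have "r_disjoint X (preimage_submetric X f ` \<U> i) (R i)" if "i \<in> {1..k}" for i
      proof (rule r_disjoint_preimage_submetric[OF mono])
        show "\<forall>x\<in>mspace X. \<forall>y\<in>mspace X. mdist Y (f x) (f y) \<le> \<rho>2 (mdist X x y)"
          using upper f(1) by fast
        show "r_disjoint Y (\<U> i) (\<rho>2 (max (R i) 0))" using \<U> that by blast
      qed
      moreover have "(\<Union>i\<in>{1..k}. \<Union>V\<in>preimage_submetric X f ` \<U> i. mspace V) = mspace X"
        using f(3) cover by (intro cover_preimage_submetric) simp
      ultimately show ?thesis
        by (intro exI[of _ "\<lambda>i. preimage_submetric X f ` \<U> i"])
          (simp add: is_subspace_preimage_submetric)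
    qed
    then show ?thesis unfolding fam_arrow_def by blast
  qed
  then show ?thesis by blast
qed

lemma bounded_family_coarse_embedding:
  assumes fm: "family_map F \<X> \<Y>" and ce: "coarse_embedding_fam F" and "bounded_family \<Y>"
  shows "bounded_family \<X>"
proof -
  obtain \<rho>1 \<rho>2 :: "real \<Rightarrow> real" where proper: "\<forall>b. bounded {t. t \<ge> 0 \<and> \<rho>1 t \<le> b}" and
    lower: "\<forall>(X, f, Y)\<in>F. \<forall>x\<in>mspace X. \<forall>x'\<in>mspace X. \<rho>1 (mdist X x x') \<le> mdist Y (f x) (f x')"
    using ce unfolding coarse_embedding_fam_def by fast
  obtain B where B: "\<forall>Y\<in>\<Y>. \<forall>y\<in>mspace Y. \<forall>y'\<in>mspace Y. mdist Y y y' \<le> B"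
    using \<open>bounded_family \<Y>\<close> unfolding bounded_family_def by blast
  obtain C where C: "\<forall>t\<in>{t. t \<ge> 0 \<and> \<rho>1 t \<le> B}. norm t \<le> C"
    using proper unfolding bounded_iff by blast
  have "mdist X x x' \<le> C" if "X \<in> \<X>" "x \<in> mspace X" "x' \<in> mspace X" for X x x'
  proof -
    obtain f Y where f: "(X, f, Y) \<in> F" "Y \<in> \<Y>" "f ` mspace X \<subseteq> mspace Y"
      using fm \<open>X \<in> \<X>\<close> by (rule family_mapE)
    have "\<rho>1 (mdist X x x') \<le> mdist Y (f x) (f x')" using lower f(1) that by fast
    also have "\<dots> \<le> B" using B f that by blast
    finally show ?thesis using C by fastforce
  qed
  then show ?thesis unfolding bounded_family_def by blast
qed

lemma Cclass_bottom:
  fixes \<alpha> :: "'o::wellorder"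
  assumes "\<forall>\<beta>. \<not> \<beta> < \<alpha>"
  shows "(Cclass \<alpha> :: 'a metric set set) = {\<X>. bounded_family \<X>}"
  by (subst Cclass_unfold) (simp add: assms)

lemma Cclass_nonbottom:
  fixes \<alpha> :: "'o::wellorder"
  assumes "\<not> (\<forall>\<beta>. \<not> \<beta> < \<alpha>)"
  shows "(Cclass \<alpha> :: 'a metric set set) =
     {\<X>. \<forall>R::nat \<Rightarrow> real. \<exists>\<beta><\<alpha>. \<exists>\<Y>\<in>Cclass \<beta>. fam_arrow \<X> R \<Y>}"
  by (subst Cclass_unfold) (simp only: assms if_False)

theorem theorem3p1:
  fixes \<alpha> :: "'o::wellorder"
    and \<X> :: "'a metric set" and \<Y> :: "'b metric set"
    and F :: "('a metric \<times> ('a \<Rightarrow> 'b) \<times> 'b metric) set"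
  assumes "family_map F \<X> \<Y>"
    and "coarse_embedding_fam F"
    and "\<Y> \<in> Cclass \<alpha>"
  shows "\<X> \<in> Cclass \<alpha>"
  using assms
proof (induction \<alpha> arbitrary: \<X> \<Y> F rule: less_induct)
  case (less \<alpha>)
  show ?case
  proof (cases "\<forall>\<beta>. \<not> \<beta> < \<alpha>")
    case True
    with less.prems show ?thesis
      by (simp add: Cclass_bottom bounded_family_coarse_embedding)
  next
    case False
    have "\<exists>\<beta><\<alpha>. \<exists>\<W>\<in>Cclass \<beta>. fam_arrow \<X> R \<W>" for R
    proof -
      obtain R' where R': "\<forall>\<Z>. fam_arrow \<Y> R' \<Z> \<longrightarrow> fam_arrow \<X> R (fst ` pullback_family F \<Z>)"
        using fam_arrow_pullback less.prems(1,2) by blast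
      obtain \<beta> and \<Z> :: "'b metric set" where "\<beta> < \<alpha>" "\<Z> \<in> Cclass \<beta>" "fam_arrow \<Y> R' \<Z>"
        using less.prems(3) Cclass_nonbottom[OF False] by blast
      moreover have "fst ` pullback_family F \<Z> \<in> Cclass \<beta>"
        using less.IH[OF \<open>\<beta> < \<alpha>\<close> family_map_pullback] less.prems(2) \<open>\<Z> \<in> Cclass \<beta>\<close>
        by (simp add: coarse_embedding_fam_pullback)
      ultimately show ?thesis using R' by blast
    qed
    then show ?thesis using Cclass_nonbottom[OF False] by blast
  qed
qed

end
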